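(* Let $(\lambda,v)$ be an exact eigenpair of the eigenvalue problem on $V$ (so $\langle v,v\rangle=1$), with $\lambda$ simple, and let $\mathfrak V^{(k)}\subset V$ be a finite-dimensional subspace with Galerkin eigenpairs $(\bar\lambda_j^{(k)},\bar v_j^{(k)})_{j=1}^{N_k}$. Let $i$ be an index such that $1/\bar\lambda_i^{(k)}$ is the closest of the numbers $1/\bar\lambda_j^{(k)}$ to $1/\lambda$, and assume $\delta_\lambda^{(k)}:=\min_{j\neq i}\big|\frac1{\bar\lambda_j^{(k)}}-\frac1\lambda\big|>0$. Let $E_{i,k}:V\to\operatorname{span}\{\bar v_i^{(k)}\}$ be defined by $\langle E_{i,k}w,\bar v_i^{(k)}\rangle=\langle w,\bar v_i^{(k)}\rangle$ for all $w\in V$. Then $$\|E_{i,k}v-v\|\le\sqrt{1+\frac{1}{\lambda_1(\delta_\lambda^{(k)})^2}\eta^2(\mathfrak V^{(k)})}\;\delta_k(\lambda),$$ $$\|E_{i,k}v-v\|_0\le\Big(1+\frac1{\lambda_1\delta_\lambda^{(k)}}\Big)\eta(\mathfrak V^{(k)})\,\|E_{i,k}v-v\|.$$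
   Context: Let $V\subset V_0\subset V^*$ be real Hilbert spaces forming a Gelfand triple ($V^*$ the dual of $V$; the pairing $[\cdot,\cdot]$ between $V^*$ and $V$ extends the inner product of $V_0$, whose norm is $\|\cdot\|_0$; $V_0\to V^*$ compact and dense). $\mathcal L:V\to V^*$ is a symmetric positive linear bijection; $\langle u,w\rangle:=[\mathcal Lu,w]$, $\|u\|^2=\langle u,u\rangle$. (In the paper $V$ is finite-dimensional.) Eigenvalue problem: find $(\lambda,v)\in\mathbb R\times V$ with $\langle v,v\rangle=1$ and $\langle v,w\rangle=\lambda[v,w]$ for all $w\in V$; its eigenvalues are $0<\lambda_1\le\lambda_2\le\cdots$, and $\lambda_1=\min_{0\ne w\in V}\langle w,w\rangle/[w,w]$. $M(\lambda)$ denotes the eigenspace of $\lambda$. For a subspace $\mathfrak V^{(k)}$ with $N_k=\dim\mathfrak V^{(k)}$, the Galerkin problem is: find $(\bar\lambda,\bar v)\in\mathbb R\times\mathfrak V^{(k)}$ with $\langle\bar v,\bar v\rangle=1$ and $\langle\bar v,w\rangle=\bar\lambda[\bar v,w]$ for all $w\in\mathfrak V^{(k)}$; its eigenpairs are $(\bar\lambda_j^{(k)},\bar v_j^{(k)})$, $j=1,\dots,N_k$, with $0<\bar\lambda_1^{(k)}\le\dots\le\bar\lambda_{N_k}^{(k)}$ and $\langle\bar v_i^{(k)},\bar v_j^{(k)}\rangle=\delta_{ij}$. $\eta(\mathfrak V^{(k)}):=\sup_{f\in V_0,\|f\|_0=1}\inf_{w\in\mathfrak V^{(k)}}\|\mathcal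 L^{-1}f-w\|$; $\delta_k(\lambda):=\sup_{u\in M(\lambda),\|u\|=1}\inf_{w\in\mathfrak V^{(k)}}\|u-w\|$. *)

theory Defs
  imports "HOL-Analysis.Analysis"
begin

text \<open>Finite-dimensional setting: V = V_0 is a euclidean space whose inner product
  is the V_0 inner product [.,.]; the energy product is <u,w> = [L u, w].\<close>

definition energy :: "('a::euclidean_space \<Rightarrow> 'a) \<Rightarrow> 'a \<Rightarrow> 'a \<Rightarrow> real" where
  "energy L u w = (L u) \<bullet> w"

definition enorm :: "('a::euclidean_space \<Rightarrow> 'a) \<Rightarrow> 'a \<Rightarrow> real" where
  "enorm L u = sqrt (energy L u u)"

definition admissible_op :: "('a::euclidean_space \<Rightarrow> 'a) \<Rightarrow> bool" where
  "admissible_op L \<longleftrightarrow> linear L \<and> bij L \<and> (\<forall>u w. L u \<bullet> w = u \<bullet> L w)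
     \<and> (\<forall>u. u \<noteq> 0 \<longrightarrow> L u \<bullet> u > 0)"

definition is_eigenpair :: "('a::euclidean_space \<Rightarrow> 'a) \<Rightarrow> real \<Rightarrow> 'a \<Rightarrow> bool" where
  "is_eigenpair L lam v \<longleftrightarrow> energy L v v = 1 \<and> (\<forall>w. energy L v w = lam * (v \<bullet> w))"

definition eigenspace :: "('a::euclidean_space \<Rightarrow> 'a) \<Rightarrow> real \<Rightarrow> 'a set" where
  "eigenspace L lam = {u. \<forall>w. energy L u w = lam * (u \<bullet> w)}"

definition lambda1 :: "('a::euclidean_space \<Rightarrow> 'a) \<Rightarrow> real" where
  "lambda1 L = (INF w\<in>-{0}. energy L w w / (w \<bullet> w))"

definition galerkin_eigenpairs ::
  "('a::euclidean_space \<Rightarrow> 'a) \<Rightarrow> 'a set \<Rightarrow> nat \<Rightarrow> (nat \<Rightarrow> real) \<Rightarrow> (nat \<Rightarrow> 'a) \<Rightarrow> bool" where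
  "galerkin_eigenpairs L S N lb vb \<longleftrightarrow>
     subspace S \<and> N = dim S \<and>
     (\<forall>j\<in>{1..N}. vb j \<in> S \<and> (\<forall>w\<in>S. energy L (vb j) w = lb j * (vb j \<bullet> w))) \<and>
     (\<forall>i\<in>{1..N}. \<forall>j\<in>{1..N}. energy L (vb i) (vb j) = (if i = j then 1 else 0)) \<and>
     (N \<ge> 1 \<longrightarrow> 0 < lb 1) \<and>
     (\<forall>i\<in>{1..N}. \<forall>j\<in>{1..N}. i \<le> j \<longrightarrow> lb i \<le> lb j)"

definition eta :: "('a::euclidean_space \<Rightarrow> 'a) \<Rightarrow> 'a set \<Rightarrow> real" where
  "eta L S = (SUP f\<in>{f. norm f = 1}. INF w\<in>S. enorm L (inv L f - w))"

definition delta_approx :: "('a::euclidean_space \<Rightarrow> 'a) \<Rightarrow> 'a set \<Rightarrow> real \<Rightarrow> real" where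
  "delta_approx L S lam =
     (SUP u\<in>{u\<in>eigenspace L lam. enorm L u = 1}. INF w\<in>S. enorm L (u - w))"

end

theory Submission
  imports Defs
begin

text \<open>Let \<open>P\<close> be the Ritz projection onto \<open>S\<close> and \<open>c\<^sub>j = \<langle>v, vb j\<rangle>\<close>. Then
  \<open>v - E v = g + h\<close> with \<open>g = v - P v\<close>, energy-orthogonal to \<open>S\<close>, and
  \<open>h \<in> S\<close> the sum of the \<open>c\<^sub>j vb j\<close> over \<open>j \<noteq> i\<close>. Testing \<open>g\<close> against \<open>vb j\<close> with the eigen-equations of \<open>v\<close>
  and \<open>vb j\<close> gives \<open>[g, vb j] = c\<^sub>j (1/\<lambda> - 1/lb j)\<close>, so the gap bounds each \<open>c\<^sub>j\<close>,
  \<open>j \<noteq> i\<close>, by \<open>|[g, vb j]| / \<delta>\<close>. A Bessel inequality for the \<open>[.,.]\<close>-orthogonal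
  \<open>vb j\<close> together with \<open>\<lambda>\<^sub>1 \<le> lb j\<close> then bounds \<open>\<parallel>h\<parallel>\<close> and \<open>\<parallel>h\<parallel>\<^sub>0\<close> by \<open>\<parallel>g\<parallel>\<^sub>0\<close>; the
  Aubin--Nitsche duality gives \<open>\<parallel>g\<parallel>\<^sub>0 \<le> \<eta> \<parallel>g\<parallel>\<close>, and \<open>\<parallel>g\<parallel> \<le> \<delta>\<^sub>k(\<lambda>)\<close> because \<open>P v\<close> is
  the best approximation of \<open>v\<close> in \<open>S\<close>. Neither the simplicity of \<open>\<lambda>\<close> nor the choice
  of \<open>i\<close> as the closest index is needed: the estimates hold for the projection onto
  any set of Galerkin modes, with \<open>\<delta>\<close> the gap to the omitted ones.\<close>

lemma inner_sum_biorthogonal_right: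
  assumes "finite I" "k \<in> I"
    and "\<And>j k. j \<in> I \<Longrightarrow> k \<in> I \<Longrightarrow> p j \<bullet> q k = (if j = k then d j else 0)"
  shows "(\<Sum>j\<in>I. x j *\<^sub>R p j) \<bullet> q k = x k * d k"
proof -
  have "(\<Sum>j\<in>I. x j *\<^sub>R p j) \<bullet> q k = (\<Sum>j\<in>I. if j = k then x k * d k else 0)"
    unfolding inner_sum_left using assms(2,3) by (intro sum.cong) auto
  then show ?thesis
    using assms(1,2) by simp
qed

lemma inner_sum_biorthogonal:
  assumes "finite I"
    and "\<And>j k. j \<in> I \<Longrightarrow> k \<in> I \<Longrightarrow> p j \<bullet> q k = (if j = k then d j else 0)"
  shows "(\<Sum>j\<in>I. x j *\<^sub>R p j) \<bullet> (\<Sum>k\<in>I. y k *\<^sub>R q k) = (\<Sum>j\<in>I. x j * y j * d j)"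
  unfolding inner_sum_right using inner_sum_biorthogonal_right[OF assms(1) _ assms(2)]
  by (intro sum.cong) (simp_all add: algebra_simps)

lemma is_eigenpairD:
  assumes "is_eigenpair L lam v"
  shows "v \<in> eigenspace L lam" "lam \<noteq> 0" "enorm L v = 1"
  using assms by (auto simp: is_eigenpair_def eigenspace_def enorm_def)

locale energy_space =
  fixes L :: "'a::euclidean_space \<Rightarrow> 'a"
  assumes admissible: "admissible_op L"
begin

lemma linear_L: "linear L"
  using admissible by (simp add: admissible_op_def)

lemmas L_simps [simp] =
  linear_0[OF linear_L] linear_add[OF linear_L] linear_diff[OF linear_L]
  linear_scale[OF linear_L] linear_sum[OF linear_L]

lemma energy_commute: "L u \<bullet> w = L w \<bullet> u"
  using admissible unfolding admissible_op_def by (metis inner_commute)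

lemma energy_pos: "u \<noteq> 0 \<Longrightarrow> 0 < L u \<bullet> u"
  using admissible unfolding admissible_op_def by blast

lemma energy_nonneg: "0 \<le> L u \<bullet> u"
  using energy_pos[of u] by (cases "u = 0") auto

lemma L_inv [simp]: "L (inv L f) = f"
  using admissible unfolding admissible_op_def by (meson bij_inv_eq_iff)

lemma linear_inv_L: "linear (inv L)"
  using admissible linear_L unfolding admissible_op_def
  by (simp add: bij_is_inj inj_linear_imp_inv_linear)

lemma enorm_nonneg: "0 \<le> enorm L u"
  by (simp add: enorm_def energy_def energy_nonneg)

lemma enorm_power2: "(enorm L u)\<^sup>2 = L u \<bullet> u"
  by (simp add: enorm_def energy_def energy_nonneg)

lemma enorm_scaleR: "enorm L (c *\<^sub>R u) = \<bar>c\<bar> * enorm L u"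
  by (simp add: enorm_def energy_def real_sqrt_mult mult.assoc[symmetric])

lemma enorm_minus_commute: "enorm L (u - w) = enorm L (w - u)"
  using enorm_scaleR[of "-1" "u - w"] by simp

lemma energy_Cauchy_Schwarz: "\<bar>L u \<bullet> w\<bar> \<le> enorm L u * enorm L w"
proof (cases "w = 0")
  case False
  have ww: "0 < L w \<bullet> w"
    using energy_pos[OF False] .
  define t where "t = (L u \<bullet> w) / (L w \<bullet> w)"
  have "0 \<le> L (u - t *\<^sub>R w) \<bullet> (u - t *\<^sub>R w)"
    by (rule energy_nonneg)
  also have "\<dots> = L u \<bullet> u - (L u \<bullet> w)\<^sup>2 / (L w \<bullet> w)"
    using ww energy_commute[of w u]
    by (simp add: t_def inner_diff_left inner_diff_right power2_eq_square field_simps)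
  finally have "(L u \<bullet> w)\<^sup>2 \<le> (enorm L u * enorm L w)\<^sup>2"
    using ww by (simp add: power_mult_distrib enorm_power2 field_simps)
  then show ?thesis
    using enorm_nonneg by (simp add: power2_le_iff_abs_le)
qed (simp add: enorm_def energy_def)

lemma enorm_add_Pythagorean:
  assumes "L u \<bullet> w = 0"
  shows "(enorm L (u + w))\<^sup>2 = (enorm L u)\<^sup>2 + (enorm L w)\<^sup>2"
proof -
  have "L w \<bullet> u = 0"
    using assms energy_commute by simp
  then show ?thesis
    using assms by (simp add: enorm_power2 inner_add_left inner_add_right)
qed

lemma lambda1_le_Rayleigh: "w \<noteq> 0 \<Longrightarrow> lambda1 L \<le> L w \<bullet> w / (w \<bullet> w)"
  unfolding lambda1_def energy_def
  by (rule cINF_lower) (auto intro!: bdd_belowI[of _ 0] divide_nonneg_nonneg energy_nonneg)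

lemma lambda1_pos: "0 < lambda1 L"
proof -
  have "continuous_on (sphere 0 1) (\<lambda>w. L w \<bullet> w)"
    using linear_L by (intro continuous_intros linear_continuous_on linear_conv_bounded_linear[THEN iffD1])
  moreover have "sphere (0::'a) 1 \<noteq> {}"
    by simp
  ultimately obtain x where x: "x \<in> sphere 0 1"
    and min: "\<And>y. y \<in> sphere 0 1 \<Longrightarrow> L x \<bullet> x \<le> L y \<bullet> y"
    using continuous_attains_inf[OF compact_sphere] by blast
  have "L x \<bullet> x \<le> L w \<bullet> w / (w \<bullet> w)" if "w \<in> - {0}" for w
  proof -
    have "L x \<bullet> x \<le> L ((1 / norm w) *\<^sub>R w) \<bullet> ((1 / norm w) *\<^sub>R w)"
      using that by (intro min) simp
    also have "\<dots> = L w \<bullet> w / (w \<bullet> w)"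
      using that by (simp add: dot_square_norm power2_eq_square)
    finally show ?thesis .
  qed
  then have "L x \<bullet> x \<le> lambda1 L"
    unfolding lambda1_def energy_def by (intro cINF_greatest) auto
  moreover have "0 < L x \<bullet> x"
    using x by (intro energy_pos) auto
  ultimately show ?thesis
    by linarith
qed

lemma INF_enorm_dist_nonneg: "subspace S \<Longrightarrow> 0 \<le> (INF w\<in>S. enorm L (u - w))"
  by (rule cINF_greatest) (auto intro: enorm_nonneg subspace_0)

lemma INF_enorm_dist_le:
  assumes "subspace S"
  shows "(INF w\<in>S. enorm L (u - w)) \<le> enorm L u"
proof -
  have "(INF w\<in>S. enorm L (u - w)) \<le> enorm L (u - 0)"
    by (rule cINF_lower) (auto intro: bdd_belowI[of _ 0] enorm_nonneg subspace_0[OF assms])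
  then show ?thesis
    by simp
qed

lemma INF_enorm_dist_le_eta:
  assumes S: "subspace S" and f: "norm f = 1"
  shows "(INF w\<in>S. enorm L (inv L f - w)) \<le> eta L S"
  unfolding eta_def
proof (rule cSUP_upper)
  obtain B where B: "\<And>f. norm (inv L f) \<le> B * norm f"
    using linear_bounded[OF linear_inv_L] by blast
  have "(INF w\<in>S. enorm L (inv L g - w)) \<le> sqrt B" if "norm g = 1" for g
  proof -
    have "(enorm L (inv L g))\<^sup>2 = g \<bullet> inv L g"
      by (simp add: enorm_power2)
    also have "\<dots> \<le> norm g * norm (inv L g)"
      by (rule norm_cauchy_schwarz)
    also have "\<dots> \<le> B"
      using B[of g] that by simp
    finally have "enorm L (inv L g) \<le> sqrt B"
      using enorm_nonneg real_le_rsqrt by blast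
    then show ?thesis
      using INF_enorm_dist_le[OF S] order_trans by blast
  qed
  then show "bdd_above ((\<lambda>f. INF w\<in>S. enorm L (inv L f - w)) ` {f. norm f = 1})"
    by (intro bdd_aboveI[of _ "sqrt B"]) auto
qed (use f in simp)

lemma eta_nonneg:
  assumes "subspace S"
  shows "0 \<le> eta L S"
proof -
  obtain b :: 'a where b: "b \<in> Basis"
    using nonempty_Basis by blast
  show ?thesis
    using order_trans[OF INF_enorm_dist_nonneg[OF assms] INF_enorm_dist_le_eta[OF assms norm_Basis[OF b]]] .
qed

lemma aubin_nitsche:
  assumes S: "subspace S" and orth: "\<And>w. w \<in> S \<Longrightarrow> L g \<bullet> w = 0"
  shows "norm g \<le> eta L S * enorm L g"
proof (cases "g = 0")
  case True
  then show ?thesis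
    using eta_nonneg[OF S] enorm_nonneg by simp
next
  case False
  define f where "f = (1 / norm g) *\<^sub>R g"
  have eg: "0 < enorm L g"
    using energy_pos[OF False] by (simp add: enorm_def energy_def)
  have inv_g: "inv L g = norm g *\<^sub>R inv L f"
    using False by (simp add: f_def linear_scale[OF linear_inv_L])
  have "norm g \<le> enorm L (inv L f - w) * enorm L g" if w: "w \<in> S" for w
  proof -
    have "L (norm g *\<^sub>R w) \<bullet> g = L g \<bullet> (norm g *\<^sub>R w)"
      by (rule energy_commute)
    also have "\<dots> = 0"
      using orth subspace_scale[OF S w] by blast
    finally have "(norm g)\<^sup>2 = L (inv L g - norm g *\<^sub>R w) \<bullet> g"
      by (simp add: inner_diff_left power2_norm_eq_inner)
    also have "\<dots> \<le> enorm L (inv L g - norm g *\<^sub>R w) * enorm L g"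
      using energy_Cauchy_Schwarz abs_le_D1 by blast
    also have "inv L g - norm g *\<^sub>R w = norm g *\<^sub>R (inv L f - w)"
      by (simp add: inv_g scaleR_diff_right)
    also have "enorm L \<dots> * enorm L g = norm g * (enorm L (inv L f - w) * enorm L g)"
      by (simp add: enorm_scaleR)
    finally show ?thesis
      using False by (simp add: power2_eq_square)
  qed
  then have "norm g / enorm L g \<le> (INF w\<in>S. enorm L (inv L f - w))"
    using eg subspace_0[OF S] by (intro cINF_greatest) (auto simp: divide_le_eq)
  also have "\<dots> \<le> eta L S"
    using False by (intro INF_enorm_dist_le_eta[OF S]) (simp add: f_def)
  finally show ?thesis
    using eg by (simp add: divide_le_eq mult.commute)
qed

lemma INF_enorm_dist_le_delta_approx:
  assumes "subspace S" "u \<in> eigenspace L lam" "enorm L u = 1"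
  shows "(INF w\<in>S. enorm L (u - w)) \<le> delta_approx L S lam"
proof -
  have "(INF w\<in>S. enorm L (u' - w)) \<le> 1" if "enorm L u' = 1" for u'
    using INF_enorm_dist_le[OF assms(1), of u'] that by simp
  then show ?thesis
    unfolding delta_approx_def using assms by (intro cSUP_upper bdd_aboveI[of _ 1]) auto
qed

end

locale galerkin_system = energy_space +
  fixes S :: "('a::euclidean_space) set" and N :: nat and lb :: "nat \<Rightarrow> real" and vb :: "nat \<Rightarrow> 'a"
  assumes galerkin: "galerkin_eigenpairs L S N lb vb"
begin

lemma subspace_S: "subspace S"
  using galerkin by (simp add: galerkin_eigenpairs_def)

lemma vb_in_S: "j \<in> {1..N} \<Longrightarrow> vb j \<in> S"
  using galerkin unfolding galerkin_eigenpairs_def by blast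

lemma energy_vb_galerkin: "j \<in> {1..N} \<Longrightarrow> w \<in> S \<Longrightarrow> L (vb j) \<bullet> w = lb j * (vb j \<bullet> w)"
  using galerkin unfolding galerkin_eigenpairs_def energy_def by blast

lemma energy_vb: "j \<in> {1..N} \<Longrightarrow> k \<in> {1..N} \<Longrightarrow> L (vb j) \<bullet> vb k = (if j = k then 1 else 0)"
  using galerkin unfolding galerkin_eigenpairs_def energy_def by blast

lemma lambda1_le_lb:
  assumes j: "j \<in> {1..N}"
  shows "lambda1 L \<le> lb j"
proof -
  have "vb j \<noteq> 0"
    using energy_vb[OF j j] by auto
  moreover have "lb j * (vb j \<bullet> vb j) = 1"
    using energy_vb_galerkin[OF j vb_in_S[OF j]] energy_vb[OF j j] by simp
  ultimately have "L (vb j) \<bullet> vb j / (vb j \<bullet> vb j) = lb j"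
    using energy_vb[OF j j] by (simp add: divide_eq_eq)
  then show ?thesis
    using lambda1_le_Rayleigh[OF \<open>vb j \<noteq> 0\<close>] by simp
qed

lemma lb_pos: "j \<in> {1..N} \<Longrightarrow> 0 < lb j"
  using lambda1_pos lambda1_le_lb by (rule less_le_trans)

lemma inner_vb: "j \<in> {1..N} \<Longrightarrow> k \<in> {1..N} \<Longrightarrow> vb j \<bullet> vb k = (if j = k then 1 / lb j else 0)"
  using energy_vb_galerkin[OF _ vb_in_S, of j k] energy_vb[of j k] lb_pos[of j]
  by (auto simp: eq_divide_eq mult.commute)

lemma S_subset_span_vb: "S \<subseteq> span (vb ` {1..N})"
proof -
  have "inj_on vb {1..N}"
    using energy_vb by (intro inj_onI) (metis zero_neq_one)
  then have "card (vb ` {1..N}) = dim S"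
    using galerkin by (simp add: card_image galerkin_eigenpairs_def)
  moreover have "independent (vb ` {1..N})"
  proof (rule pairwise_orthogonal_independent)
    show "pairwise orthogonal (vb ` {1..N})"
      using inner_vb by (auto simp: pairwise_def orthogonal_def)
    show "0 \<notin> vb ` {1..N}"
      using energy_vb by (metis imageE inner_zero_right zero_neq_one)
  qed
  moreover have "vb ` {1..N} \<subseteq> S"
    using vb_in_S by blast
  ultimately show ?thesis
    using card_eq_dim[of "vb ` {1..N}" S] by blast
qed

text \<open>\<open>galerkin_proj I\<close> is the energy-orthogonal projection onto the span of the
  modes \<open>vb j\<close>, \<open>j \<in> I\<close>: for \<open>I = {1..N}\<close> it is the Ritz projection onto \<open>S\<close>, and
  for \<open>I = {i}\<close> it is the operator \<open>E\<^sub>i\<^sub>,\<^sub>k\<close> of the paper.\<close>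
definition galerkin_proj :: "nat set \<Rightarrow> 'a \<Rightarrow> 'a" where
  "galerkin_proj I u = (\<Sum>j\<in>I. (L u \<bullet> vb j) *\<^sub>R vb j)"

lemma galerkin_proj_in_S: "I \<subseteq> {1..N} \<Longrightarrow> galerkin_proj I u \<in> S"
  unfolding galerkin_proj_def using vb_in_S subspace_S
  by (intro subspace_sum subspace_scale) auto

lemma galerkin_proj_split:
  "I \<subseteq> {1..N} \<Longrightarrow> galerkin_proj {1..N} u = galerkin_proj I u + galerkin_proj ({1..N} - I) u"
  unfolding galerkin_proj_def by (simp add: sum.subset_diff)

lemma energy_galerkin_proj_vb:
  assumes I: "I \<subseteq> {1..N}" and k: "k \<in> I"
  shows "L (galerkin_proj I u) \<bullet> vb k = L u \<bullet> vb k"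
proof -
  have "L (galerkin_proj I u) = (\<Sum>j\<in>I. (L u \<bullet> vb j) *\<^sub>R L (vb j))"
    by (simp add: galerkin_proj_def)
  also have "\<dots> \<bullet> vb k = (L u \<bullet> vb k) * 1"
    by (intro inner_sum_biorthogonal_right[OF finite_subset[OF I finite_atLeastAtMost] k])
      (rule energy_vb; use I in blast)
  finally show ?thesis
    by simp
qed

lemma inner_galerkin_proj_vb:
  assumes I: "I \<subseteq> {1..N}" and k: "k \<in> I"
  shows "galerkin_proj I u \<bullet> vb k = (L u \<bullet> vb k) / lb k"
proof -
  have "galerkin_proj I u \<bullet> vb k = (L u \<bullet> vb k) * (1 / lb k)"
    unfolding galerkin_proj_def
    by (intro inner_sum_biorthogonal_right[OF finite_subset[OF I finite_atLeastAtMost] k])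
      (rule inner_vb; use I in blast)
  then show ?thesis
    by simp
qed

lemma enorm_galerkin_proj:
  assumes I: "I \<subseteq> {1..N}"
  shows "(enorm L (galerkin_proj I u))\<^sup>2 = (\<Sum>j\<in>I. (L u \<bullet> vb j)\<^sup>2)"
proof -
  have "L (galerkin_proj I u) = (\<Sum>j\<in>I. (L u \<bullet> vb j) *\<^sub>R L (vb j))"
    by (simp add: galerkin_proj_def)
  also have "\<dots> \<bullet> galerkin_proj I u = (\<Sum>j\<in>I. (L u \<bullet> vb j) * (L u \<bullet> vb j) * 1)"
    unfolding galerkin_proj_def
    by (intro inner_sum_biorthogonal[OF finite_subset[OF I finite_atLeastAtMost]])
      (rule energy_vb; use I in blast)
  finally show ?thesis
    unfolding enorm_power2 by (simp add: power2_eq_square)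
qed

lemma norm_galerkin_proj:
  assumes I: "I \<subseteq> {1..N}"
  shows "(norm (galerkin_proj I u))\<^sup>2 = (\<Sum>j\<in>I. (L u \<bullet> vb j)\<^sup>2 / lb j)"
proof -
  have "galerkin_proj I u \<bullet> galerkin_proj I u
      = (\<Sum>j\<in>I. (L u \<bullet> vb j) * (L u \<bullet> vb j) * (1 / lb j))"
    unfolding galerkin_proj_def
    by (intro inner_sum_biorthogonal[OF finite_subset[OF I finite_atLeastAtMost]])
      (rule inner_vb; use I in blast)
  then show ?thesis
    unfolding power2_norm_eq_inner by (simp add: power2_eq_square)
qed

lemma ritz_error_orthogonal:
  assumes "w \<in> S"
  shows "L (u - galerkin_proj {1..N} u) \<bullet> w = 0"
proof -
  have vb_orth: "L (u - galerkin_proj {1..N} u) \<bullet> vb k = 0" if "k \<in> {1..N}" for k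
    using energy_galerkin_proj_vb[OF order_refl that] by (simp add: inner_diff_left)
  have "orthogonal (L (u - galerkin_proj {1..N} u)) w"
  proof (rule orthogonal_to_span)
    show "w \<in> span (vb ` {1..N})"
      using assms S_subset_span_vb by blast
  qed (use vb_orth in \<open>auto simp: orthogonal_def\<close>)
  then show ?thesis
    by (simp add: orthogonal_def)
qed

lemma ritz_error_le_enorm_dist:
  assumes "w \<in> S"
  shows "enorm L (u - galerkin_proj {1..N} u) \<le> enorm L (u - w)"
proof -
  let ?g = "u - galerkin_proj {1..N} u"
  have "galerkin_proj {1..N} u - w \<in> S"
    using subspace_diff[OF subspace_S galerkin_proj_in_S[OF order_refl] assms] .
  then have "(enorm L (?g + (galerkin_proj {1..N} u - w)))\<^sup>2
      = (enorm L ?g)\<^sup>2 + (enorm L (galerkin_proj {1..N} u - w))\<^sup>2"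
    by (intro enorm_add_Pythagorean ritz_error_orthogonal)
  then have "(enorm L ?g)\<^sup>2 \<le> (enorm L (u - w))\<^sup>2"
    by simp
  then show ?thesis
    using enorm_nonneg by (rule power2_le_imp_le)
qed

lemma ritz_error_le_delta_approx:
  assumes "u \<in> eigenspace L lam" "enorm L u = 1"
  shows "enorm L (u - galerkin_proj {1..N} u) \<le> delta_approx L S lam"
proof -
  have "enorm L (u - galerkin_proj {1..N} u) \<le> (INF w\<in>S. enorm L (u - w))"
    using ritz_error_le_enorm_dist subspace_0[OF subspace_S] by (intro cINF_greatest) auto
  also have "\<dots> \<le> delta_approx L S lam"
    using INF_enorm_dist_le_delta_approx[OF subspace_S assms] .
  finally show ?thesis .
qed

lemma ritz_error_le_eta:
  "norm (u - galerkin_proj {1..N} u) \<le> eta L S * enorm L (u - galerkin_proj {1..N} u)"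
  using aubin_nitsche[OF subspace_S] ritz_error_orthogonal .

lemma weighted_Bessel: "(\<Sum>j\<in>{1..N}. lb j * (g \<bullet> vb j)\<^sup>2) \<le> g \<bullet> g"
proof -
  define q where "q = (\<Sum>j\<in>{1..N}. (lb j * (g \<bullet> vb j)) *\<^sub>R vb j)"
  have "q \<bullet> q = (\<Sum>j\<in>{1..N}. lb j * (g \<bullet> vb j)\<^sup>2)"
    unfolding q_def using inner_vb lb_pos
    by (subst inner_sum_biorthogonal[where d = "\<lambda>j. 1 / lb j"])
      (auto simp: power2_eq_square intro!: sum.cong)
  moreover have "q \<bullet> g = (\<Sum>j\<in>{1..N}. lb j * (g \<bullet> vb j)\<^sup>2)"
    unfolding q_def inner_sum_left by (simp add: power2_eq_square inner_commute mult.assoc)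
  moreover have "0 \<le> (g - q) \<bullet> (g - q)"
    by simp
  ultimately show ?thesis
    by (simp add: inner_diff_left inner_diff_right inner_commute)
qed

lemma enorm_galerkin_proj_error_power2:
  assumes I: "I \<subseteq> {1..N}"
  shows "(enorm L (u - galerkin_proj I u))\<^sup>2
    = (enorm L (u - galerkin_proj {1..N} u))\<^sup>2 + (enorm L (galerkin_proj ({1..N} - I) u))\<^sup>2"
proof -
  have split:
    "u - galerkin_proj I u = (u - galerkin_proj {1..N} u) + galerkin_proj ({1..N} - I) u"
    using galerkin_proj_split[OF I] by simp
  show ?thesis
    unfolding split by (intro enorm_add_Pythagorean ritz_error_orthogonal galerkin_proj_in_S) auto
qed

lemma eigvec_ritz_error_inner_vb:
  assumes v: "v \<in> eigenspace L lam" and lam: "lam \<noteq> 0" and j: "j \<in> {1..N}"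
  shows "(v - galerkin_proj {1..N} v) \<bullet> vb j = (L v \<bullet> vb j) * (1 / lam - 1 / lb j)"
proof -
  have "v \<bullet> vb j = (L v \<bullet> vb j) / lam"
    using v lam by (simp add: eigenspace_def energy_def)
  then show ?thesis
    using inner_galerkin_proj_vb[OF order_refl j] by (simp add: inner_diff_left algebra_simps)
qed

lemma weighted_coeffs_le_spectral_gap:
  assumes v: "v \<in> eigenspace L lam" and lam: "lam \<noteq> 0" and J: "J \<subseteq> {1..N}"
    and d: "0 < d" and gap: "\<forall>j\<in>J. d \<le> \<bar>1 / lb j - 1 / lam\<bar>"
  shows "(\<Sum>j\<in>J. lb j * (L v \<bullet> vb j)\<^sup>2) \<le> (norm (v - galerkin_proj {1..N} v))\<^sup>2 / d\<^sup>2"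
proof -
  let ?g = "v - galerkin_proj {1..N} v"
  have "d\<^sup>2 * (lb j * (L v \<bullet> vb j)\<^sup>2) \<le> lb j * (?g \<bullet> vb j)\<^sup>2" if "j \<in> J" for j
  proof -
    have "d * \<bar>L v \<bullet> vb j\<bar> \<le> \<bar>1 / lam - 1 / lb j\<bar> * \<bar>L v \<bullet> vb j\<bar>"
      using gap that by (simp add: abs_minus_commute mult_right_mono)
    then have "(d * (L v \<bullet> vb j))\<^sup>2 \<le> ((1 / lam - 1 / lb j) * (L v \<bullet> vb j))\<^sup>2"
      using d by (simp add: abs_le_square_iff[symmetric] abs_mult)
    then show ?thesis
      using lb_pos[of j] that J eigvec_ritz_error_inner_vb[OF v lam, of j]
      by (auto simp: power_mult_distrib mult.commute mult.left_commute intro: mult_left_mono)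
  qed
  then have "d\<^sup>2 * (\<Sum>j\<in>J. lb j * (L v \<bullet> vb j)\<^sup>2) \<le> (\<Sum>j\<in>J. lb j * (?g \<bullet> vb j)\<^sup>2)"
    by (simp add: sum_distrib_left sum_mono)
  also have "\<dots> \<le> (\<Sum>j\<in>{1..N}. lb j * (?g \<bullet> vb j)\<^sup>2)"
  proof (rule sum_mono2)
    show "0 \<le> lb j * (?g \<bullet> vb j)\<^sup>2" if "j \<in> {1..N} - J" for j
      using lb_pos[of j] that by simp
  qed (use J in auto)
  also have "\<dots> \<le> (norm ?g)\<^sup>2"
    unfolding power2_norm_eq_inner by (rule weighted_Bessel)
  finally show ?thesis
    using d by (simp add: field_simps)
qed

lemma enorm_galerkin_proj_le_spectral_gap:
  assumes v: "v \<in> eigenspace L lam" and lam: "lam \<noteq> 0" and J: "J \<subseteq> {1..N}"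
    and d: "0 < d" and gap: "\<forall>j\<in>J. d \<le> \<bar>1 / lb j - 1 / lam\<bar>"
  shows "(enorm L (galerkin_proj J v))\<^sup>2
    \<le> (norm (v - galerkin_proj {1..N} v))\<^sup>2 / (lambda1 L * d\<^sup>2)"
proof -
  have "(L v \<bullet> vb j)\<^sup>2 \<le> lb j * (L v \<bullet> vb j)\<^sup>2 / lambda1 L" if "j \<in> J" for j
    using lambda1_pos lambda1_le_lb[of j] subsetD[OF J that]
    by (simp add: field_simps mult_right_mono)
  then have "(enorm L (galerkin_proj J v))\<^sup>2 \<le> (\<Sum>j\<in>J. lb j * (L v \<bullet> vb j)\<^sup>2) / lambda1 L"
    unfolding enorm_galerkin_proj[OF J] sum_divide_distrib by (rule sum_mono)
  also have "\<dots> \<le> (norm (v - galerkin_proj {1..N} v))\<^sup>2 / d\<^sup>2 / lambda1 L"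
    using lambda1_pos by (intro divide_right_mono[OF weighted_coeffs_le_spectral_gap[OF assms]]) simp
  finally show ?thesis
    by (simp add: field_simps)
qed

lemma norm_galerkin_proj_le_spectral_gap:
  assumes v: "v \<in> eigenspace L lam" and lam: "lam \<noteq> 0" and J: "J \<subseteq> {1..N}"
    and d: "0 < d" and gap: "\<forall>j\<in>J. d \<le> \<bar>1 / lb j - 1 / lam\<bar>"
  shows "norm (galerkin_proj J v) \<le> norm (v - galerkin_proj {1..N} v) / (lambda1 L * d)"
proof -
  have "(L v \<bullet> vb j)\<^sup>2 / lb j \<le> lb j * (L v \<bullet> vb j)\<^sup>2 / (lambda1 L)\<^sup>2" if "j \<in> J" for j
  proof -
    have j: "j \<in> {1..N}"
      using that J by blast
    have "(lambda1 L)\<^sup>2 \<le> lb j * lb j"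
      using lambda1_pos lambda1_le_lb[OF j] by (simp add: power2_eq_square mult_mono)
    then have "(lambda1 L)\<^sup>2 * (L v \<bullet> vb j)\<^sup>2 \<le> lb j * lb j * (L v \<bullet> vb j)\<^sup>2"
      by (rule mult_right_mono) simp
    then show ?thesis
      using lambda1_pos lb_pos[OF j] by (simp add: field_simps)
  qed
  then have "(norm (galerkin_proj J v))\<^sup>2 \<le> (\<Sum>j\<in>J. lb j * (L v \<bullet> vb j)\<^sup>2) / (lambda1 L)\<^sup>2"
    unfolding norm_galerkin_proj[OF J] sum_divide_distrib by (rule sum_mono)
  also have "\<dots> \<le> (norm (v - galerkin_proj {1..N} v))\<^sup>2 / d\<^sup>2 / (lambda1 L)\<^sup>2"
    by (intro divide_right_mono[OF weighted_coeffs_le_spectral_gap[OF assms]]) simp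
  also have "\<dots> = (norm (v - galerkin_proj {1..N} v) / (lambda1 L * d))\<^sup>2"
    by (simp add: power_divide power_mult_distrib mult.commute)
  finally show ?thesis
    by (rule power2_le_imp_le) (use lambda1_pos d in simp)
qed

theorem eigvec_galerkin_proj_enorm_error:
  assumes eig: "is_eigenpair L lam v" and I: "I \<subseteq> {1..N}"
    and d: "0 < d" and gap: "\<forall>j\<in>{1..N} - I. d \<le> \<bar>1 / lb j - 1 / lam\<bar>"
  shows "enorm L (v - galerkin_proj I v)
    \<le> sqrt (1 + (eta L S)\<^sup>2 / (lambda1 L * d\<^sup>2)) * delta_approx L S lam"
proof -
  let ?g = "v - galerkin_proj {1..N} v" and ?c = "1 + (eta L S)\<^sup>2 / (lambda1 L * d\<^sup>2)"
  note v = is_eigenpairD[OF eig]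
  have c: "0 \<le> ?c"
    using lambda1_pos by (simp add: add_nonneg_nonneg)
  have "(enorm L (v - galerkin_proj I v))\<^sup>2
      = (enorm L ?g)\<^sup>2 + (enorm L (galerkin_proj ({1..N} - I) v))\<^sup>2"
    by (rule enorm_galerkin_proj_error_power2[OF I])
  also have "\<dots> \<le> (enorm L ?g)\<^sup>2 + (norm ?g)\<^sup>2 / (lambda1 L * d\<^sup>2)"
    using enorm_galerkin_proj_le_spectral_gap[OF v(1,2) _ d gap] by simp
  also have "\<dots> \<le> (enorm L ?g)\<^sup>2 + (eta L S * enorm L ?g)\<^sup>2 / (lambda1 L * d\<^sup>2)"
    using ritz_error_le_eta lambda1_pos d
    by (intro add_left_mono divide_right_mono power_mono) auto
  also have "\<dots> = ?c * (enorm L ?g)\<^sup>2"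
    using lambda1_pos d by (simp add: field_simps power_mult_distrib)
  also have "\<dots> \<le> ?c * (delta_approx L S lam)\<^sup>2"
    using ritz_error_le_delta_approx[OF v(1,3)] enorm_nonneg c
    by (intro mult_left_mono power_mono) auto
  finally have "enorm L (v - galerkin_proj I v) \<le> sqrt (?c * (delta_approx L S lam)\<^sup>2)"
    by (rule real_le_rsqrt)
  also have "\<dots> = sqrt ?c * delta_approx L S lam"
    using order_trans[OF enorm_nonneg ritz_error_le_delta_approx[OF v(1,3)]]
    by (simp add: real_sqrt_mult)
  finally show ?thesis .
qed

theorem eigvec_galerkin_proj_norm_error:
  assumes eig: "is_eigenpair L lam v" and I: "I \<subseteq> {1..N}"
    and d: "0 < d" and gap: "\<forall>j\<in>{1..N} - I. d \<le> \<bar>1 / lb j - 1 / lam\<bar>"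
  shows "norm (v - galerkin_proj I v)
    \<le> (1 + 1 / (lambda1 L * d)) * eta L S * enorm L (v - galerkin_proj I v)"
proof -
  let ?g = "v - galerkin_proj {1..N} v" and ?h = "galerkin_proj ({1..N} - I) v"
  note v = is_eigenpairD[OF eig]
  have c: "0 \<le> 1 + 1 / (lambda1 L * d)"
    using lambda1_pos d by (simp add: add_nonneg_nonneg)
  have split: "v - galerkin_proj I v = ?g + ?h"
    using galerkin_proj_split[OF I] by simp
  have "norm (v - galerkin_proj I v) \<le> norm ?g + norm ?h"
    unfolding split by (rule norm_triangle_ineq)
  also have "\<dots> \<le> (1 + 1 / (lambda1 L * d)) * norm ?g"
    using norm_galerkin_proj_le_spectral_gap[OF v(1,2) _ d gap] by (simp add: algebra_simps)
  also have "\<dots> \<le> (1 + 1 / (lambda1 L * d)) * (eta L S * enorm L ?g)"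
    using ritz_error_le_eta c by (rule mult_left_mono)
  also have "\<dots> \<le> (1 + 1 / (lambda1 L * d)) * (eta L S * enorm L (v - galerkin_proj I v))"
  proof -
    have "(enorm L ?g)\<^sup>2 \<le> (enorm L (v - galerkin_proj I v))\<^sup>2"
      unfolding enorm_galerkin_proj_error_power2[OF I] by simp
    then have "enorm L ?g \<le> enorm L (v - galerkin_proj I v)"
      by (rule power2_le_imp_le) (rule enorm_nonneg)
    then show ?thesis
      using c eta_nonneg[OF subspace_S] by (intro mult_left_mono) auto
  qed
  finally show ?thesis
    by (simp add: mult.assoc)
qed

end

theorem lemma3:
  fixes L :: "'a::euclidean_space \<Rightarrow> 'a"
    and lam :: real and v :: 'a
    and S :: "'a set" and N :: nat and lb :: "nat \<Rightarrow> real" and vb :: "nat \<Rightarrow> 'a"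
    and i :: nat and E :: "'a \<Rightarrow> 'a"
  assumes L: "admissible_op L"
    and eig: "is_eigenpair L lam v"
    and simple: "dim (eigenspace L lam) = 1"
    and gal: "galerkin_eigenpairs L S N lb vb"
    and N2: "2 \<le> N"
    and i: "i \<in> {1..N}"
    and closest: "\<forall>j\<in>{1..N}. \<bar>1 / lb i - 1 / lam\<bar> \<le> \<bar>1 / lb j - 1 / lam\<bar>"
    and gap: "Min {\<bar>1 / lb j - 1 / lam\<bar> | j. j \<in> {1..N} \<and> j \<noteq> i} > 0"
    and E: "\<forall>w. E w \<in> span {vb i} \<and> energy L (E w) (vb i) = energy L w (vb i)"
  shows "enorm L (E v - v)
           \<le> sqrt (1 + (eta L S)\<^sup>2 / (lambda1 L * (Min {\<bar>1 / lb j - 1 / lam\<bar> | j. j \<in> {1..N} \<and> j \<noteq> i})\<^sup>2))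
              * delta_approx L S lam
       \<and> norm (E v - v)
           \<le> (1 + 1 / (lambda1 L * Min {\<bar>1 / lb j - 1 / lam\<bar> | j. j \<in> {1..N} \<and> j \<noteq> i}))
              * eta L S * enorm L (E v - v)"
proof -
  interpret galerkin_system L S N lb vb
    using L gal by unfold_locales
  let ?d = "Min {\<bar>1 / lb j - 1 / lam\<bar> | j. j \<in> {1..N} \<and> j \<noteq> i}"
  have "{\<bar>1 / lb j - 1 / lam\<bar> | j. j \<in> {1..N} \<and> j \<noteq> i}
      = (\<lambda>j. \<bar>1 / lb j - 1 / lam\<bar>) ` ({1..N} - {i})"
    by auto
  then have d_le: "\<forall>j\<in>{1..N} - {i}. ?d \<le> \<bar>1 / lb j - 1 / lam\<bar>"
    by simp
  obtain a where a: "E v = a *\<^sub>R vb i"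
    using E span_singleton by blast
  have "L (E v) \<bullet> vb i = L v \<bullet> vb i"
    using E by (simp add: energy_def)
  then have "a = L v \<bullet> vb i"
    using energy_vb[OF i i] a by simp
  then have "E v = galerkin_proj {i} v"
    using a by (simp add: galerkin_proj_def)
  then show ?thesis
    using eigvec_galerkin_proj_enorm_error[OF eig _ gap d_le]
      eigvec_galerkin_proj_norm_error[OF eig _ gap d_le] i
    by (simp add: enorm_minus_commute norm_minus_commute)
qed

end
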